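(* Let $\xi,\zeta$ be admissible families and suppose that for each predictable stopping time $\tau\in\mathcal T$ with $\tau>0$ a.s., $\{\xi(\tau)=\zeta(\tau)\}=\emptyset$ a.s. Then for each $\theta\in\mathcal T$ and each non-decreasing sequence of stopping times $(\theta_n)_{n\in\mathbb N}\subset\mathcal T$ with $\theta_n\uparrow\theta$, $$\{\xi(\theta)=\zeta(\theta)\}\cap\{\theta_n<\theta\text{ for all }n\}=\emptyset\quad\text{a.s.}$$
   Context: Filtered probability space $(\Omega,\mathcal F,(\mathcal F_t)_{0\le t\le T},P)$ satisfying the usual conditions, $\mathcal F=\mathcal F_T$, $\mathcal F_0$ trivial, $T\in(0,\infty)$. $\mathcal T$: stopping times valued in $[0,T]$. A family $\phi=(\phi(\theta),\theta\in\mathcal T)$ of $\overline{\mathbb R}$-valued random variables is admissible if each $\phi(\theta)$ is $\mathcal F_\theta$-measurable and $\phi(\theta)=\phi(\theta')$ a.s. on $\{\theta=\theta'\}$. "$E=\emptyset$ a.s." means $P(E)=0$. *)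

theory Defs
  imports "HOL-Probability.Probability"
begin

definition usual_filtered_prob_space ::
  "'a measure \<Rightarrow> (real \<Rightarrow> 'a set set) \<Rightarrow> real \<Rightarrow> bool" where
  "usual_filtered_prob_space M F T \<longleftrightarrow>
     prob_space M \<and> 0 < T \<and>
     (\<forall>t\<in>{0..T}. sigma_algebra (space M) (F t) \<and> F t \<subseteq> sets M) \<and>
     (\<forall>s\<in>{0..T}. \<forall>t\<in>{0..T}. s \<le> t \<longrightarrow> F s \<subseteq> F t) \<and>
     F T = sets M \<and>
     \<comment> \<open>completeness of the space and of F 0 (usual conditions)\<close>
     (\<forall>A\<in>null_sets M. \<forall>B. B \<subseteq> A \<longrightarrow> B \<in> sets M) \<and>
     null_sets M \<subseteq> F 0 \<and>
     \<comment> \<open>right-continuity (usual conditions)\<close>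
     (\<forall>t\<in>{0..<T}. F t = (\<Inter>s\<in>{t<..T}. F s)) \<and>
     \<comment> \<open>F 0 is trivial\<close>
     (\<forall>A\<in>F 0. emeasure M A = 0 \<or> emeasure M A = 1)"

definition stopping_timeT ::
  "'a measure \<Rightarrow> (real \<Rightarrow> 'a set set) \<Rightarrow> real \<Rightarrow> ('a \<Rightarrow> real) \<Rightarrow> bool" where
  "stopping_timeT M F T \<theta> \<longleftrightarrow>
     (\<forall>\<omega>\<in>space M. 0 \<le> \<theta> \<omega> \<and> \<theta> \<omega> \<le> T) \<and>
     (\<forall>t\<in>{0..T}. {\<omega>\<in>space M. \<theta> \<omega> \<le> t} \<in> F t)"

definition F_at ::
  "'a measure \<Rightarrow> (real \<Rightarrow> 'a set set) \<Rightarrow> real \<Rightarrow> ('a \<Rightarrow> real) \<Rightarrow> 'a set set" where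
  "F_at M F T \<theta> = {A\<in>sets M. \<forall>t\<in>{0..T}. A \<inter> {\<omega>\<in>space M. \<theta> \<omega> \<le> t} \<in> F t}"

definition admissible ::
  "'a measure \<Rightarrow> (real \<Rightarrow> 'a set set) \<Rightarrow> real \<Rightarrow> (('a \<Rightarrow> real) \<Rightarrow> 'a \<Rightarrow> ereal) \<Rightarrow> bool" where
  "admissible M F T \<phi> \<longleftrightarrow>
     (\<forall>\<theta>. stopping_timeT M F T \<theta> \<longrightarrow>
        (\<forall>B\<in>sets (borel :: ereal measure). \<phi> \<theta> -` B \<inter> space M \<in> F_at M F T \<theta>)) \<and>
     (\<forall>\<theta> \<theta>'. stopping_timeT M F T \<theta> \<longrightarrow> stopping_timeT M F T \<theta>' \<longrightarrow>
        (AE \<omega> in M. \<theta> \<omega> = \<theta>' \<omega> \<longrightarrow> \<phi> \<theta> \<omega> = \<phi> \<theta>' \<omega>))"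

definition predictable_sets ::
  "'a measure \<Rightarrow> (real \<Rightarrow> 'a set set) \<Rightarrow> real \<Rightarrow> (real \<times> 'a) set set" where
  "predictable_sets M F T =
     sigma_sets ({0..T} \<times> space M)
       ({{0} \<times> A | A. A \<in> F 0} \<union>
        {{s<..t} \<times> A | s t A. 0 \<le> s \<and> s < t \<and> t \<le> T \<and> A \<in> F s})"

definition predictable_stopping_time ::
  "'a measure \<Rightarrow> (real \<Rightarrow> 'a set set) \<Rightarrow> real \<Rightarrow> ('a \<Rightarrow> real) \<Rightarrow> bool" where
  "predictable_stopping_time M F T \<tau> \<longleftrightarrow>
     stopping_timeT M F T \<tau> \<and>
     {(t, \<omega>). \<omega> \<in> space M \<and> \<tau> \<omega> \<le> t \<and> t \<le> T} \<in> predictable_sets M F T"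

end

theory Submission
  imports Defs
begin

text \<open>Let \<open>B\<close> be the event on which every \<open>\<theta>\<^sub>n\<close> lies strictly below \<open>\<theta>\<close>, and let
  \<open>\<tau>\<close> equal \<open>\<theta>\<close> on \<open>B\<close> and \<open>T\<close> off \<open>B\<close>. Since \<open>B \<inter> {\<theta> \<le> s}\<close> is \<open>F s\<close>-measurable,
  \<open>\<tau>\<close> is a stopping time, and it is positive. It is predictable: on \<open>B\<close> the interval
  \<open>[[\<tau>, T]]\<close> is the intersection of the \<open>]]\<theta>\<^sub>n, T]]\<close>, while off \<open>B\<close> that intersection is
  \<open>]]\<theta>, T]]\<close>, which is removed again, leaving only \<open>{T} \<times> \<Omega>\<close>. Hence \<open>\<xi>(\<tau>) \<noteq> \<zeta>(\<tau>)\<close> a.s.,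
  and by admissibility \<open>\<xi>(\<tau>) = \<xi>(\<theta>)\<close>, \<open>\<zeta>(\<tau>) = \<zeta>(\<theta>)\<close> a.s. on \<open>B \<subseteq> {\<tau> = \<theta>}\<close>.\<close>

lemma all_less_iff_tendsto_from_below:
  fixes x :: "nat \<Rightarrow> real"
  assumes le: "\<And>n. x n \<le> l" and lim: "x \<longlonglongrightarrow> l"
  shows "(\<forall>n. x n < t) \<longleftrightarrow> (if \<forall>n. x n < l then l \<le> t else l < t)"
proof (cases "\<forall>n. x n < l")
  case True
  have "l \<le> t" if "\<forall>n. x n < t"
    using lim that by (intro LIMSEQ_le_const2) (auto intro: less_imp_le)
  with True show ?thesis by (auto intro: less_le_trans)
next
  case False
  then obtain n where "x n = l" using le by (meson antisym not_less)
  with False show ?thesis using le by (metis le_less_trans)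
qed

lemma admissible_borel_measurable:
  assumes "admissible M F T \<phi>" and "stopping_timeT M F T \<theta>"
  shows "\<phi> \<theta> \<in> borel_measurable M"
proof (rule measurableI)
  fix A :: "ereal set" assume "A \<in> sets borel"
  then show "\<phi> \<theta> -` A \<inter> space M \<in> sets M"
    using assms unfolding admissible_def F_at_def by blast
qed simp

locale horizon_filtration =
  fixes M :: "'a measure" and F :: "real \<Rightarrow> 'a set set" and T :: real
  assumes T_pos: "0 < T"
    and sigma_algebra_F: "0 \<le> t \<Longrightarrow> t \<le> T \<Longrightarrow> sigma_algebra (space M) (F t)"
    and F_mono: "0 \<le> s \<Longrightarrow> s \<le> t \<Longrightarrow> t \<le> T \<Longrightarrow> F s \<subseteq> F t"
    and F_T: "F T = sets M"

lemma usual_filtered_prob_space_imp_horizon_filtration: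
  "usual_filtered_prob_space M F T \<Longrightarrow> horizon_filtration M F T"
  unfolding usual_filtered_prob_space_def horizon_filtration_def by auto

definition stoch_Ioc :: "'a measure \<Rightarrow> real \<Rightarrow> ('a \<Rightarrow> real) \<Rightarrow> (real \<times> 'a) set" where
  "stoch_Ioc M T \<sigma> = {(t, \<omega>). \<omega> \<in> space M \<and> \<sigma> \<omega> < t \<and> 0 \<le> t \<and> t \<le> T}"

text \<open>The restriction \<open>\<theta>\<^sub>A\<close> of a stopping time to an event, with the horizon \<open>T\<close> playing
  the role of \<open>+\<infinity>\<close>.\<close>
definition restrict_time :: "'a set \<Rightarrow> ('a \<Rightarrow> real) \<Rightarrow> real \<Rightarrow> 'a \<Rightarrow> real" where
  "restrict_time A \<theta> T \<omega> = (if \<omega> \<in> A then \<theta> \<omega> else T)"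

context horizon_filtration
begin

lemma predictable_sets_sigma_algebra:
  "sigma_algebra ({0..T} \<times> space M) (predictable_sets M F T)"
  unfolding predictable_sets_def
proof (rule sigma_algebra_sigma_sets)
  have "F t \<subseteq> Pow (space M)" if "0 \<le> t" "t \<le> T" for t
    using sigma_algebra_F[OF that] by (simp add: sigma_algebra_iff2)
  then show "{{0} \<times> A |A. A \<in> F 0} \<union>
      {{s<..t} \<times> A |s t A. 0 \<le> s \<and> s < t \<and> t \<le> T \<and> A \<in> F s}
      \<subseteq> Pow ({0..T} \<times> space M)"
    using T_pos by fastforce
qed

sublocale predictable: sigma_algebra "{0..T} \<times> space M" "predictable_sets M F T"
  by (rule predictable_sets_sigma_algebra)

lemma stopping_time_less_in_F:
  assumes \<theta>: "stopping_timeT M F T \<theta>" and q: "0 \<le> q" "q \<le> T"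
  shows "{\<omega>\<in>space M. \<theta> \<omega> < q} \<in> F q"
proof -
  interpret sigma_algebra "space M" "F q" using sigma_algebra_F q .
  let ?R = "{r\<in>\<rat>. 0 \<le> r \<and> r < q}"
  have "{\<omega>\<in>space M. \<theta> \<omega> < q} = (\<Union>r\<in>?R. {\<omega>\<in>space M. \<theta> \<omega> \<le> r})"
  proof (intro set_eqI iffI)
    fix \<omega> assume \<omega>: "\<omega> \<in> {\<omega>\<in>space M. \<theta> \<omega> < q}"
    then obtain r where "r \<in> \<rat>" "\<theta> \<omega> < r" "r < q"
      using Rats_dense_in_real by blast
    with \<omega> \<theta> show "\<omega> \<in> (\<Union>r\<in>?R. {\<omega>\<in>space M. \<theta> \<omega> \<le> r})"
      unfolding stopping_timeT_def by (force intro!: bexI[of _ r])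
  qed auto
  also have "\<dots> \<in> F q"
  proof (intro countable_UN'')
    fix r assume "r \<in> ?R"
    then show "{\<omega>\<in>space M. \<theta> \<omega> \<le> r} \<in> F q"
      using \<theta> F_mono[of r q] q unfolding stopping_timeT_def by auto
  qed (auto intro: countable_subset[OF _ countable_rat])
  finally show ?thesis .
qed

lemma stopping_time_less_le_in_F:
  assumes \<sigma>: "stopping_timeT M F T \<sigma>" and \<rho>: "stopping_timeT M F T \<rho>" and s: "0 \<le> s" "s \<le> T"
  shows "{\<omega>\<in>space M. \<sigma> \<omega> < \<rho> \<omega> \<and> \<rho> \<omega> \<le> s} \<in> F s"
proof -
  interpret sigma_algebra "space M" "F s" using sigma_algebra_F s .
  let ?R = "{r\<in>\<rat>. 0 \<le> r \<and> r \<le> s}"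
  let ?A = "\<lambda>r. {\<omega>\<in>space M. \<sigma> \<omega> < r} \<inter> ({\<omega>\<in>space M. \<rho> \<omega> \<le> s} - {\<omega>\<in>space M. \<rho> \<omega> < r})"
  have "{\<omega>\<in>space M. \<sigma> \<omega> < \<rho> \<omega> \<and> \<rho> \<omega> \<le> s} = (\<Union>r\<in>?R. ?A r)"
  proof (intro set_eqI iffI)
    fix \<omega> assume \<omega>: "\<omega> \<in> {\<omega>\<in>space M. \<sigma> \<omega> < \<rho> \<omega> \<and> \<rho> \<omega> \<le> s}"
    then obtain r where "r \<in> \<rat>" "\<sigma> \<omega> < r" "r < \<rho> \<omega>"
      using Rats_dense_in_real by blast
    moreover have "0 \<le> \<sigma> \<omega>" using \<sigma> \<omega> unfolding stopping_timeT_def by auto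
    ultimately show "\<omega> \<in> (\<Union>r\<in>?R. ?A r)" using \<omega> by (force intro!: bexI[of _ r])
  qed auto
  also have "\<dots> \<in> F s"
  proof (intro countable_UN'')
    fix r assume r: "r \<in> ?R"
    have "F r \<subseteq> F s" using r s by (intro F_mono) auto
    then show "?A r \<in> F s"
      using r s stopping_time_less_in_F[OF \<sigma>, of r] stopping_time_less_in_F[OF \<rho>, of r] \<rho>
      unfolding stopping_timeT_def by (intro Int Diff) auto
  qed (auto intro: countable_subset[OF _ countable_rat])
  finally show ?thesis .
qed

lemma stoch_Ioc_predictable:
  assumes less: "\<And>q. 0 \<le> q \<Longrightarrow> q \<le> T \<Longrightarrow> {\<omega>\<in>space M. \<sigma> \<omega> < q} \<in> F q"
  shows "stoch_Ioc M T \<sigma> \<in> predictable_sets M F T"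
proof -
  let ?R = "{r\<in>\<rat>. 0 \<le> r \<and> r < T}"
  let ?Y = "\<lambda>r. {r<..T} \<times> {\<omega>\<in>space M. \<sigma> \<omega> < r}"
  have "stoch_Ioc M T \<sigma> = {0} \<times> {\<omega>\<in>space M. \<sigma> \<omega> < 0} \<union> (\<Union>r\<in>?R. ?Y r)"
  proof (intro set_eqI iffI)
    fix x assume "x \<in> stoch_Ioc M T \<sigma>"
    then obtain t \<omega> where x: "x = (t, \<omega>)" "\<omega> \<in> space M" "\<sigma> \<omega> < t" "0 \<le> t" "t \<le> T"
      unfolding stoch_Ioc_def by auto
    show "x \<in> {0} \<times> {\<omega>\<in>space M. \<sigma> \<omega> < 0} \<union> (\<Union>r\<in>?R. ?Y r)"
    proof (cases "t = 0")
      case False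
      then obtain r where "r \<in> \<rat>" "max (\<sigma> \<omega>) 0 < r" "r < t"
        using x Rats_dense_in_real[of "max (\<sigma> \<omega>) 0" t] by auto
      then show ?thesis using x by (intro UnI2 UN_I[of r]) auto
    qed (use x in auto)
  qed (use T_pos in \<open>auto simp: stoch_Ioc_def\<close>)
  also have "\<dots> \<in> predictable_sets M F T"
  proof (intro predictable.Un predictable.countable_UN'')
    show "{0} \<times> {\<omega>\<in>space M. \<sigma> \<omega> < 0} \<in> predictable_sets M F T"
      unfolding predictable_sets_def using less[of 0] T_pos by (intro sigma_sets.Basic) auto
    show "?Y r \<in> predictable_sets M F T" if "r \<in> ?R" for r
      unfolding predictable_sets_def using less[of r] that
      by (intro sigma_sets.Basic UnI2 CollectI exI[of _ r] exI[of _ T]) auto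
  qed (auto intro: countable_subset[OF _ countable_rat])
  finally show ?thesis .
qed

lemma horizon_predictable: "{T} \<times> space M \<in> predictable_sets M F T"
proof -
  let ?R = "{r\<in>\<rat>. r < T}"
  have "{T} \<times> space M = (\<Inter>r\<in>?R. stoch_Ioc M T (\<lambda>_. r))"
  proof (intro set_eqI iffI)
    fix x assume x: "x \<in> (\<Inter>r\<in>?R. stoch_Ioc M T (\<lambda>_. r))"
    obtain t \<omega> where [simp]: "x = (t, \<omega>)" by (cases x)
    have "0 \<in> ?R" using T_pos by auto
    with x have t: "\<omega> \<in> space M" "t \<le> T" by (auto simp: stoch_Ioc_def)
    have "\<not> t < T"
    proof
      assume "t < T"
      then obtain r where "r \<in> \<rat>" "t < r" "r < T" using Rats_dense_in_real by blast
      then show False using x by (auto simp: stoch_Ioc_def)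
    qed
    with t show "x \<in> {T} \<times> space M" by auto
  qed (use T_pos in \<open>auto simp: stoch_Ioc_def\<close>)
  also have "\<dots> \<in> predictable_sets M F T"
  proof (intro predictable.countable_INT' stoch_Ioc_predictable image_subsetI)
    fix r q :: real assume "0 \<le> q" "q \<le> T"
    then interpret sigma_algebra "space M" "F q" using sigma_algebra_F by blast
    show "{\<omega>\<in>space M. r < q} \<in> F q" by (cases "r < q") auto
  qed (use T_pos in \<open>auto intro: countable_subset[OF _ countable_rat]\<close>)
  finally show ?thesis .
qed

lemma stopping_time_restrict_time:
  assumes \<theta>: "stopping_timeT M F T \<theta>"
    and A: "\<And>s. 0 \<le> s \<Longrightarrow> s \<le> T \<Longrightarrow> {\<omega>\<in>space M. \<omega> \<in> A \<and> \<theta> \<omega> \<le> s} \<in> F s"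
  shows "stopping_timeT M F T (restrict_time A \<theta> T)"
  unfolding stopping_timeT_def
proof (intro conjI ballI)
  fix \<omega> assume "\<omega> \<in> space M"
  then show "0 \<le> restrict_time A \<theta> T \<omega>" "restrict_time A \<theta> T \<omega> \<le> T"
    using \<theta> T_pos unfolding stopping_timeT_def restrict_time_def by auto
next
  fix t assume t: "t \<in> {0..T}"
  show "{\<omega>\<in>space M. restrict_time A \<theta> T \<omega> \<le> t} \<in> F t"
  proof (cases "t = T")
    case True
    then have "{\<omega>\<in>space M. restrict_time A \<theta> T \<omega> \<le> t} = space M"
      using \<theta> unfolding stopping_timeT_def restrict_time_def by auto
    then show ?thesis using True F_T by simp
  next
    case False
    then have "{\<omega>\<in>space M. restrict_time A \<theta> T \<omega> \<le> t} = {\<omega>\<in>space M. \<omega> \<in> A \<and> \<theta> \<omega> \<le> t}"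
      using t unfolding restrict_time_def by auto
    then show ?thesis using A t by simp
  qed
qed

lemma announced_le_in_F:
  fixes \<theta>s :: "nat \<Rightarrow> 'a \<Rightarrow> real"
  assumes \<theta>: "stopping_timeT M F T \<theta>" and \<theta>s: "\<And>n. stopping_timeT M F T (\<theta>s n)"
    and s: "0 \<le> s" "s \<le> T"
  shows "{\<omega>\<in>space M. (\<forall>n. \<theta>s n \<omega> < \<theta> \<omega>) \<and> \<theta> \<omega> \<le> s} \<in> F s"
proof -
  interpret Fs: sigma_algebra "space M" "F s" using sigma_algebra_F s .
  have "{\<omega>\<in>space M. (\<forall>n. \<theta>s n \<omega> < \<theta> \<omega>) \<and> \<theta> \<omega> \<le> s} =
      (\<Inter>n. {\<omega>\<in>space M. \<theta>s n \<omega> < \<theta> \<omega> \<and> \<theta> \<omega> \<le> s})"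
    by auto
  also have "\<dots> \<in> F s"
    using stopping_time_less_le_in_F[OF \<theta>s \<theta> s] by (intro Fs.countable_INT) auto
  finally show ?thesis .
qed

lemma predictable_restrict_time_announced:
  fixes \<theta> :: "'a \<Rightarrow> real" and \<theta>s :: "nat \<Rightarrow> 'a \<Rightarrow> real"
  defines "B \<equiv> {\<omega>. \<forall>n. \<theta>s n \<omega> < \<theta> \<omega>}"
  assumes \<theta>: "stopping_timeT M F T \<theta>" and \<theta>s: "\<And>n. stopping_timeT M F T (\<theta>s n)"
    and le: "\<And>n \<omega>. \<omega> \<in> space M \<Longrightarrow> \<theta>s n \<omega> \<le> \<theta> \<omega>"
    and lim: "\<And>\<omega>. \<omega> \<in> space M \<Longrightarrow> (\<lambda>n. \<theta>s n \<omega>) \<longlonglongrightarrow> \<theta> \<omega>"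
  shows "predictable_stopping_time M F T (restrict_time B \<theta> T)"
proof -
  have B: "{\<omega>\<in>space M. \<omega> \<in> B \<and> \<theta> \<omega> \<le> s} \<in> F s" if "0 \<le> s" "s \<le> T" for s
    using announced_le_in_F[OF \<theta> \<theta>s that] unfolding B_def by simp
  have not_B: "{\<omega>\<in>space M. \<omega> \<in> - B \<and> \<theta> \<omega> \<le> s} \<in> F s" if s: "0 \<le> s" "s \<le> T" for s
  proof -
    interpret sigma_algebra "space M" "F s" using sigma_algebra_F s .
    have "{\<omega>\<in>space M. \<omega> \<in> - B \<and> \<theta> \<omega> \<le> s} =
        {\<omega>\<in>space M. \<theta> \<omega> \<le> s} - {\<omega>\<in>space M. \<omega> \<in> B \<and> \<theta> \<omega> \<le> s}"
      by auto
    then show ?thesis using B[OF s] \<theta> s unfolding stopping_timeT_def by auto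
  qed
  have announced_iff: "(\<forall>n. \<theta>s n \<omega> < t) \<longleftrightarrow> (if \<omega> \<in> B then \<theta> \<omega> \<le> t else \<theta> \<omega> < t)"
    if "\<omega> \<in> space M" for \<omega> t
    using all_less_iff_tendsto_from_below[of "\<lambda>n. \<theta>s n \<omega>" "\<theta> \<omega>" t] le lim that
    unfolding B_def by auto
  have \<tau>: "stopping_timeT M F T (restrict_time B \<theta> T)"
    by (rule stopping_time_restrict_time[OF \<theta> B])
  have "{(t, \<omega>). \<omega> \<in> space M \<and> restrict_time B \<theta> T \<omega> \<le> t \<and> t \<le> T} =
      ((\<Inter>n. stoch_Ioc M T (\<theta>s n)) - stoch_Ioc M T (restrict_time (- B) \<theta> T)) \<union> {T} \<times> space M"
  proof (intro set_eqI)
    fix x :: "real \<times> 'a"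
    obtain t \<omega> where [simp]: "x = (t, \<omega>)" by (cases x)
    show "x \<in> {(t, \<omega>). \<omega> \<in> space M \<and> restrict_time B \<theta> T \<omega> \<le> t \<and> t \<le> T} \<longleftrightarrow>
        x \<in> ((\<Inter>n. stoch_Ioc M T (\<theta>s n)) - stoch_Ioc M T (restrict_time (- B) \<theta> T)) \<union> {T} \<times> space M"
      using announced_iff[of \<omega> t] \<theta>
      by (auto simp: stoch_Ioc_def restrict_time_def stopping_timeT_def)
  qed
  also have "\<dots> \<in> predictable_sets M F T"
    using stopping_time_less_in_F[OF \<theta>s] stopping_time_less_in_F[OF stopping_time_restrict_time[OF \<theta> not_B]]
    by (intro predictable.Un predictable.Diff predictable.countable_INT image_subsetI
        horizon_predictable stoch_Ioc_predictable) auto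
  finally show ?thesis using \<tau> unfolding predictable_stopping_time_def by blast
qed


lemma announced_coincidence_null:
  fixes \<theta> :: "'a \<Rightarrow> real" and \<theta>s :: "nat \<Rightarrow> 'a \<Rightarrow> real"
    and \<xi> \<zeta> :: "('a \<Rightarrow> real) \<Rightarrow> 'a \<Rightarrow> ereal"
  assumes adm_\<xi>: "admissible M F T \<xi>" and adm_\<zeta>: "admissible M F T \<zeta>"
    and pred: "\<And>\<tau>. predictable_stopping_time M F T \<tau> \<Longrightarrow> (AE \<omega> in M. 0 < \<tau> \<omega>) \<Longrightarrow>
                 {\<omega>\<in>space M. \<xi> \<tau> \<omega> = \<zeta> \<tau> \<omega>} \<in> null_sets M"
    and \<theta>: "stopping_timeT M F T \<theta>" and \<theta>s: "\<And>n. stopping_timeT M F T (\<theta>s n)"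
    and le: "\<And>n \<omega>. \<omega> \<in> space M \<Longrightarrow> \<theta>s n \<omega> \<le> \<theta> \<omega>"
    and lim: "\<And>\<omega>. \<omega> \<in> space M \<Longrightarrow> (\<lambda>n. \<theta>s n \<omega>) \<longlonglongrightarrow> \<theta> \<omega>"
  shows "{\<omega>\<in>space M. \<xi> \<theta> \<omega> = \<zeta> \<theta> \<omega> \<and> (\<forall>n. \<theta>s n \<omega> < \<theta> \<omega>)} \<in> null_sets M"
proof -
  let ?B = "{\<omega>. \<forall>n. \<theta>s n \<omega> < \<theta> \<omega>}"
  let ?\<tau> = "restrict_time ?B \<theta> T"
  have \<tau>_pred: "predictable_stopping_time M F T ?\<tau>"
    by (rule predictable_restrict_time_announced[OF \<theta> \<theta>s le lim])
  then have \<tau>: "stopping_timeT M F T ?\<tau>" unfolding predictable_stopping_time_def ..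
  have "AE \<omega> in M. 0 < ?\<tau> \<omega>"
  proof (rule AE_I2)
    fix \<omega> assume \<omega>: "\<omega> \<in> space M"
    show "0 < ?\<tau> \<omega>"
    proof (cases "\<omega> \<in> ?B")
      case True
      have "0 \<le> \<theta>s 0 \<omega>" using \<theta>s[of 0] \<omega> unfolding stopping_timeT_def by auto
      with True show ?thesis unfolding restrict_time_def by (auto intro: le_less_trans)
    qed (auto simp: restrict_time_def T_pos)
  qed
  then have null: "{\<omega>\<in>space M. \<xi> ?\<tau> \<omega> = \<zeta> ?\<tau> \<omega>} \<in> null_sets M"
    by (rule pred[OF \<tau>_pred])
  have "AE \<omega> in M. ?\<tau> \<omega> = \<theta> \<omega> \<longrightarrow> \<xi> ?\<tau> \<omega> = \<xi> \<theta> \<omega>"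
    using adm_\<xi> \<tau> \<theta> unfolding admissible_def by blast
  moreover have "AE \<omega> in M. ?\<tau> \<omega> = \<theta> \<omega> \<longrightarrow> \<zeta> ?\<tau> \<omega> = \<zeta> \<theta> \<omega>"
    using adm_\<zeta> \<tau> \<theta> unfolding admissible_def by blast
  ultimately have "AE \<omega> in M. \<omega> \<notin> {\<omega>\<in>space M. \<xi> \<theta> \<omega> = \<zeta> \<theta> \<omega> \<and> (\<forall>n. \<theta>s n \<omega> < \<theta> \<omega>)}"
    using AE_not_in[OF null]
  proof eventually_elim
    case (elim \<omega>)
    have "?\<tau> \<omega> = \<theta> \<omega>" if "\<forall>n. \<theta>s n \<omega> < \<theta> \<omega>"
      using that by (simp add: restrict_time_def)
    then show ?case using elim by auto
  qed
  moreover have "{\<omega>\<in>space M. \<xi> \<theta> \<omega> = \<zeta> \<theta> \<omega> \<and> (\<forall>n. \<theta>s n \<omega> < \<theta> \<omega>)} =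
      {\<omega>\<in>space M. \<xi> \<theta> \<omega> = \<zeta> \<theta> \<omega>} \<inter> {\<omega>\<in>space M. (\<forall>n. \<theta>s n \<omega> < \<theta> \<omega>) \<and> \<theta> \<omega> \<le> T}"
    using \<theta> unfolding stopping_timeT_def by auto
  moreover have "{\<omega>\<in>space M. \<xi> \<theta> \<omega> = \<zeta> \<theta> \<omega>} \<in> sets M"
    using admissible_borel_measurable[OF adm_\<xi> \<theta>] admissible_borel_measurable[OF adm_\<zeta> \<theta>]
    by (rule measurable_equality_set)
  moreover have "{\<omega>\<in>space M. (\<forall>n. \<theta>s n \<omega> < \<theta> \<omega>) \<and> \<theta> \<omega> \<le> T} \<in> sets M"
    using announced_le_in_F[OF \<theta> \<theta>s, of T] T_pos F_T by simp
  ultimately show ?thesis by (simp add: AE_iff_null_sets)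
qed

end

theorem lemma4p7:
  fixes M :: "'a measure" and F :: "real \<Rightarrow> 'a set set" and T :: real
    and \<xi> \<zeta> :: "('a \<Rightarrow> real) \<Rightarrow> 'a \<Rightarrow> ereal"
  assumes space: "usual_filtered_prob_space M F T"
    and adm_xi: "admissible M F T \<xi>"
    and adm_zeta: "admissible M F T \<zeta>"
    and pred: "\<And>\<tau>. predictable_stopping_time M F T \<tau> \<Longrightarrow> (AE \<omega> in M. 0 < \<tau> \<omega>) \<Longrightarrow>
                 {\<omega>\<in>space M. \<xi> \<tau> \<omega> = \<zeta> \<tau> \<omega>} \<in> null_sets M"
  shows "\<forall>\<theta> (\<theta>s :: nat \<Rightarrow> 'a \<Rightarrow> real).
           stopping_timeT M F T \<theta> \<longrightarrow>
           (\<forall>n. stopping_timeT M F T (\<theta>s n)) \<longrightarrow>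
           (\<forall>n. \<forall>\<omega>\<in>space M. \<theta>s n \<omega> \<le> \<theta>s (Suc n) \<omega>) \<longrightarrow>
           (\<forall>\<omega>\<in>space M. (\<lambda>n. \<theta>s n \<omega>) \<longlonglongrightarrow> \<theta> \<omega>) \<longrightarrow>
           {\<omega>\<in>space M. \<xi> \<theta> \<omega> = \<zeta> \<theta> \<omega> \<and> (\<forall>n. \<theta>s n \<omega> < \<theta> \<omega>)} \<in> null_sets M"
proof (intro allI impI)
  fix \<theta> and \<theta>s :: "nat \<Rightarrow> 'a \<Rightarrow> real"
  assume \<theta>: "stopping_timeT M F T \<theta>" and \<theta>s: "\<forall>n. stopping_timeT M F T (\<theta>s n)"
    and mono: "\<forall>n. \<forall>\<omega>\<in>space M. \<theta>s n \<omega> \<le> \<theta>s (Suc n) \<omega>"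
    and lim: "\<forall>\<omega>\<in>space M. (\<lambda>n. \<theta>s n \<omega>) \<longlonglongrightarrow> \<theta> \<omega>"
  interpret horizon_filtration M F T
    using space by (rule usual_filtered_prob_space_imp_horizon_filtration)
  have le: "\<theta>s n \<omega> \<le> \<theta> \<omega>" if "\<omega> \<in> space M" for n \<omega>
  proof -
    have "incseq (\<lambda>n. \<theta>s n \<omega>)" using mono that by (intro incseq_SucI) auto
    then show ?thesis using lim that by (intro incseq_le) auto
  qed
  show "{\<omega>\<in>space M. \<xi> \<theta> \<omega> = \<zeta> \<theta> \<omega> \<and> (\<forall>n. \<theta>s n \<omega> < \<theta> \<omega>)} \<in> null_sets M"
    using \<theta>s lim by (intro announced_coincidence_null[OF adm_xi adm_zeta pred \<theta> _ le]) auto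
qed

end
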